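(* Let $\mathcal{W}_1,\ldots,\mathcal{W}_n\subset\mathbb{R}^n$ be finite sets with convex hulls $Q_1,\ldots,Q_n$ respectively, such that each $Q_i$ is a segment (of positive length) and $Q=Q_1+\cdots+Q_n$ has dimension $n$. Then for every vector $\delta\in\mathbb{R}^n$ of sufficiently small norm which does not lie in the linear span of $F-F$ for any proper face $F$ of $Q$, $$D(\mathcal{W}_1,\ldots,\mathcal{W}_n)=|(\mathcal{W}_1+\cdots+\mathcal{W}_n)\cap(\delta+Q)|.$$
   Context: $D(\mathcal{W}_1,\ldots,\mathcal{W}_n)=\sum_{I\subset[n]}(-1)^{n-|I|}|\sum_{i\in I}\mathcal{W}_i|$, where $\sum_{i\in I}\mathcal{W}_i=\{\sum_{i\in I}w_i:w_i\in\mathcal{W}_i\}$ and the term for $I=\emptyset$ is $(-1)^n\cdot1$. *)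

theory Defs
  imports "HOL-Analysis.Analysis"
begin

definition msum :: "('i \<Rightarrow> 'a::comm_monoid_add set) \<Rightarrow> 'i set \<Rightarrow> 'a set" where
  "msum W I = {(\<Sum>i\<in>I. w i) | w. \<forall>i\<in>I. w i \<in> W i}"

definition mixedD :: "('i \<Rightarrow> 'a::comm_monoid_add set) \<Rightarrow> 'i set \<Rightarrow> int" where
  "mixedD W J = (\<Sum>I\<in>Pow J. (-1) ^ (card J - card I) * int (card (msum W I)))"

end

theory Submission
  imports Defs
begin

text \<open>Write \<open>W\<^sub>i = a\<^sub>i + S\<^sub>i v\<^sub>i\<close> with finite \<open>S\<^sub>i \<subseteq> [0,1]\<close> containing \<open>0\<close> and \<open>1\<close>.
  Since \<open>Q\<close> is full-dimensional, the \<open>v\<^sub>i\<close> form a basis, so \<open>t \<mapsto> \<Sum>a\<^sub>i + \<Sum>t\<^sub>i v\<^sub>i\<close> is an affine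
  bijection carrying the unit cube onto \<open>Q\<close> and the grid \<open>\<Prod>S\<^sub>i\<close> onto \<open>W\<^sub>1 + \<dots> + W\<^sub>n\<close>.
  Hence \<open>|\<Sum>\<^sub>i\<^sub>\<in>\<^sub>I W\<^sub>i| = \<Prod>\<^sub>i\<^sub>\<in>\<^sub>I |S\<^sub>i|\<close> and inclusion--exclusion gives \<open>D = \<Prod>(|S\<^sub>i| - 1)\<close>.
  In these coordinates \<open>\<delta> + Q\<close> is the cube shifted by \<open>d\<close>. Genericity of \<open>\<delta>\<close> forces every
  \<open>d\<^sub>i \<noteq> 0\<close> (otherwise \<open>\<delta>\<close> is parallel to the facet \<open>t\<^sub>i = 0\<close>), and smallness makes \<open>|d\<^sub>i|\<close> less
  than every gap in \<open>S\<^sub>i\<close>, so \<open>[d\<^sub>i, 1 + d\<^sub>i]\<close> meets \<open>S\<^sub>i\<close> in all points but one endpoint.\<close>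

lemma mixedD_eq_prod:
  assumes "finite J" and card_msum: "\<And>I. I \<subseteq> J \<Longrightarrow> card (msum W I) = (\<Prod>i\<in>I. c i)"
  shows "mixedD W J = (\<Prod>i\<in>J. int (c i) - 1)"
proof -
  have "(\<Prod>i\<in>J. int (c i) + (-1)) =
        (\<Sum>I\<in>Pow J. (\<Prod>i\<in>I. int (c i)) * (\<Prod>i\<in>J - I. (-1::int)))"
    by (rule prod_add) fact
  also have "\<dots> = (\<Sum>I\<in>Pow J. (-1) ^ (card J - card I) * int (card (msum W I)))"
  proof (rule sum.cong)
    fix I assume "I \<in> Pow J"
    then have "card (J - I) = card J - card I"
      using \<open>finite J\<close> by (simp add: card_Diff_subset finite_subset)
    with \<open>I \<in> Pow J\<close> show "(\<Prod>i\<in>I. int (c i)) * (\<Prod>i\<in>J - I. (-1::int)) =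
        (-1) ^ (card J - card I) * int (card (msum W I))"
      by (simp add: card_msum mult.commute)
  qed simp
  finally show ?thesis
    unfolding mixedD_def by simp
qed

definition vec_lincomb :: "('n::finite \<Rightarrow> 'a::real_vector) \<Rightarrow> real^'n \<Rightarrow> 'a" where
  "vec_lincomb v t = (\<Sum>i\<in>UNIV. t$i *\<^sub>R v i)"

lemma linear_vec_lincomb: "linear (vec_lincomb v)"
  unfolding vec_lincomb_def
  by (rule linearI) (simp_all add: sum.distrib scaleR_add_left scaleR_sum_right)

lemma vec_lincomb_axis: "vec_lincomb v (axis j 1) = v j"
  unfolding vec_lincomb_def
  by (simp add: axis_def if_distrib[of "\<lambda>x. x *\<^sub>R _"] cong: if_cong)

lemma msum_param_segments:
  fixes a v :: "'n::finite \<Rightarrow> 'a::real_vector"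
  shows "msum (\<lambda>i. (\<lambda>s. a i + s *\<^sub>R v i) ` T i) UNIV =
         (\<lambda>t. (\<Sum>i\<in>UNIV. a i) + vec_lincomb v t) ` {t. \<forall>i. t$i \<in> T i}"
proof (rule set_eqI, rule iffI)
  fix x assume "x \<in> msum (\<lambda>i. (\<lambda>s. a i + s *\<^sub>R v i) ` T i) UNIV"
  then obtain w where x: "x = (\<Sum>i\<in>UNIV. w i)" and "\<forall>i. \<exists>s. s \<in> T i \<and> w i = a i + s *\<^sub>R v i"
    unfolding msum_def by blast
  then obtain s where s: "\<And>i. s i \<in> T i \<and> w i = a i + s i *\<^sub>R v i"
    by metis
  have "x = (\<Sum>i\<in>UNIV. a i) + vec_lincomb v (\<chi> i. s i)"
    unfolding x vec_lincomb_def using s by (simp add: sum.distrib)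
  moreover have "(\<chi> i. s i) \<in> {t. \<forall>i. t$i \<in> T i}"
    using s by simp
  ultimately show "x \<in> (\<lambda>t. (\<Sum>i\<in>UNIV. a i) + vec_lincomb v t) ` {t. \<forall>i. t$i \<in> T i}"
    by blast
next
  fix x assume "x \<in> (\<lambda>t. (\<Sum>i\<in>UNIV. a i) + vec_lincomb v t) ` {t. \<forall>i. t$i \<in> T i}"
  then obtain t where x: "x = (\<Sum>i\<in>UNIV. a i + t$i *\<^sub>R v i)" and t: "\<forall>i. t$i \<in> T i"
    by (auto simp: vec_lincomb_def sum.distrib)
  then show "x \<in> msum (\<lambda>i. (\<lambda>s. a i + s *\<^sub>R v i) ` T i) UNIV"
    unfolding msum_def by blast
qed

lemma card_msum_param_segments:
  fixes a v :: "'n::finite \<Rightarrow> 'a::real_vector"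
  assumes "inj (vec_lincomb v)"
  shows "card (msum (\<lambda>i. (\<lambda>s. a i + s *\<^sub>R v i) ` T i) I) = (\<Prod>i\<in>I. card (T i))"
proof -
  let ?f = "\<lambda>g. (\<Sum>i\<in>I. a i + g i *\<^sub>R v i)"
  have image: "msum (\<lambda>i. (\<lambda>s. a i + s *\<^sub>R v i) ` T i) I = ?f ` PiE I T"
  proof (rule set_eqI, rule iffI)
    fix x assume "x \<in> msum (\<lambda>i. (\<lambda>s. a i + s *\<^sub>R v i) ` T i) I"
    then obtain w where x: "x = (\<Sum>i\<in>I. w i)"
      and "\<forall>i\<in>I. \<exists>s. s \<in> T i \<and> w i = a i + s *\<^sub>R v i"
      unfolding msum_def by blast
    then obtain s where s: "\<And>i. i \<in> I \<Longrightarrow> s i \<in> T i \<and> w i = a i + s i *\<^sub>R v i"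
      by metis
    have "restrict s I \<in> PiE I T" and "x = ?f (restrict s I)"
      unfolding x using s by (auto intro: sum.cong)
    then show "x \<in> ?f ` PiE I T" by blast
  next
    fix x assume "x \<in> ?f ` PiE I T"
    then show "x \<in> msum (\<lambda>i. (\<lambda>s. a i + s *\<^sub>R v i) ` T i) I"
      unfolding msum_def by blast
  qed
  have "inj_on ?f (PiE I T)"
  proof (rule inj_onI)
    fix g h assume g: "g \<in> PiE I T" and h: "h \<in> PiE I T" and "?f g = ?f h"
    define t :: "real^'n" where "t = (\<chi> i. if i \<in> I then g i - h i else 0)"
    have "vec_lincomb v t = (\<Sum>i\<in>I. (g i - h i) *\<^sub>R v i)"
      unfolding vec_lincomb_def t_def
      by (simp add: if_distrib[of "\<lambda>x. x *\<^sub>R _"] sum.If_cases)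
    also have "\<dots> = 0"
      using \<open>?f g = ?f h\<close> by (simp add: scaleR_diff_left sum_subtractf sum.distrib)
    finally have "t = 0"
      using assms linear_vec_lincomb by (metis injD linear_0)
    then have "\<forall>i\<in>I. g i = h i"
      by (auto simp: t_def vec_eq_iff split: if_splits)
    then show "g = h"
      using g h by (auto intro: PiE_ext)
  qed
  then show ?thesis
    by (simp add: image card_image card_PiE)
qed

lemma mixedD_param_segments:
  fixes a v :: "'n::finite \<Rightarrow> 'a::real_vector"
  assumes inj: "inj (vec_lincomb v)" and "\<And>i. finite (T i)" "\<And>i. T i \<noteq> {}"
  shows "mixedD (\<lambda>i. (\<lambda>s. a i + s *\<^sub>R v i) ` T i) UNIV = int (\<Prod>i\<in>UNIV. card (T i) - 1)"
proof -
  have "mixedD (\<lambda>i. (\<lambda>s. a i + s *\<^sub>R v i) ` T i) UNIV = (\<Prod>i\<in>UNIV. int (card (T i)) - 1)"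
    by (rule mixedD_eq_prod) (simp_all add: card_msum_param_segments[OF inj])
  also have "\<dots> = int (\<Prod>i\<in>UNIV. card (T i) - 1)"
  proof -
    have "1 \<le> card (T i)" for i
      using assms(2,3) by (simp add: Suc_le_eq card_gt_0_iff)
    then show ?thesis
      by (simp add: of_nat_diff)
  qed
  finally show ?thesis .
qed

lemma card_vec_set: "card {t::real^'n::finite. \<forall>i. t$i \<in> T i} = (\<Prod>i\<in>UNIV. card (T i))"
proof -
  have "{t::real^'n. \<forall>i. t$i \<in> T i} = (\<lambda>f. \<chi> i. f i) ` PiE UNIV T"
  proof (rule set_eqI, rule iffI)
    fix t :: "real^'n" assume "t \<in> {t. \<forall>i. t$i \<in> T i}"
    then have "vec_nth t \<in> PiE UNIV T" and "t = (\<chi> i. vec_nth t i)"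
      by auto
    then show "t \<in> (\<lambda>f. \<chi> i. f i) ` PiE UNIV T"
      by blast
  qed auto
  moreover have "inj_on (\<lambda>f. \<chi> i. f i :: real^'n) (PiE UNIV T)"
    by (auto simp: inj_on_def vec_eq_iff fun_eq_iff)
  ultimately show ?thesis
    by (simp add: card_image card_PiE)
qed

lemma closed_segment_param: "closed_segment a b = (\<lambda>s. a + s *\<^sub>R (b - a)) ` {0..1}"
  unfolding closed_segment_image_interval
  by (intro image_cong refl) (simp add: algebra_simps)

lemma param_of_set_with_segment_hull:
  fixes W :: "'a::euclidean_space set"
  assumes "finite W" and hull: "convex hull W = closed_segment a b" and "a \<noteq> b"
  defines "S \<equiv> {s \<in> {0..1}. a + s *\<^sub>R (b - a) \<in> W}"
  shows "finite S" "0 \<in> S" "1 \<in> S" "W = (\<lambda>s. a + s *\<^sub>R (b - a)) ` S"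
proof -
  let ?p = "\<lambda>s. a + s *\<^sub>R (b - a)"
  have "inj ?p"
    using \<open>a \<noteq> b\<close> by (auto simp: inj_def)
  then show "finite S"
    using \<open>finite W\<close> finite_vimageI[of W ?p] by (auto simp: S_def elim: finite_subset[rotated])
  have "a \<in> W" "b \<in> W"
    using extreme_point_of_convex_hull extreme_point_of_segment hull by metis+
  then show "0 \<in> S" "1 \<in> S"
    by (simp_all add: S_def)
  have "W \<subseteq> ?p ` {0..1}"
    using hull_subset[of W convex] hull closed_segment_param by metis
  show "W = ?p ` S"
  proof
    show "W \<subseteq> ?p ` S"
    proof
      fix x assume "x \<in> W"
      with \<open>W \<subseteq> ?p ` {0..1}\<close> obtain s where "s \<in> {0..1}" "x = ?p s"
        by blast
      with \<open>x \<in> W\<close> show "x \<in> ?p ` S"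
        by (auto simp: S_def)
    qed
  qed (auto simp: S_def)
qed

lemma finite_sets_uniform_gap:
  fixes S :: "'n::finite \<Rightarrow> real set"
  assumes "\<And>i. finite (S i)"
  obtains g where "g > 0" "\<And>i s s'. s \<in> S i \<Longrightarrow> s' \<in> S i \<Longrightarrow> s \<noteq> s' \<Longrightarrow> g \<le> \<bar>s - s'\<bar>"
proof
  define G where "G = {\<bar>s - s'\<bar> | i s s'. s \<in> S i \<and> s' \<in> S i \<and> s \<noteq> s'}"
  have "G \<subseteq> (\<lambda>(s, s'). \<bar>s - s'\<bar>) ` (\<Union>i. S i \<times> S i)"
    unfolding G_def by force
  then have "finite G"
    using assms by (auto elim: finite_subset)
  moreover have "G \<subseteq> {0<..}"
    by (auto simp: G_def)
  ultimately show "Min (insert 1 G) > 0"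
    by (auto simp: Min_gr_iff)
  show "Min (insert 1 G) \<le> \<bar>s - s'\<bar>" if "s \<in> S i" "s' \<in> S i" "s \<noteq> s'" for i s s'
    using that \<open>finite G\<close> by (intro Min_le) (auto simp: G_def)
qed

lemma card_Int_shifted_unit_interval:
  fixes S :: "real set"
  assumes "finite S" "S \<subseteq> {0..1}" "0 \<in> S" "1 \<in> S"
    and gap: "\<And>s s'. s \<in> S \<Longrightarrow> s' \<in> S \<Longrightarrow> s \<noteq> s' \<Longrightarrow> g \<le> \<bar>s - s'\<bar>"
    and "e \<noteq> 0" "\<bar>e\<bar> < g"
  shows "card (S \<inter> {e..1 + e}) = card S - 1"
proof -
  have "S \<inter> {e..1 + e} = S - {if e > 0 then 0 else 1}"
  proof (cases "e > 0")
    case True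
    have "g \<le> \<bar>s - 0\<bar>" if "s \<in> S" "s \<noteq> 0" for s
      using gap that \<open>0 \<in> S\<close> by blast
    with True assms(2,7) show ?thesis by fastforce
  next
    case False
    have "g \<le> \<bar>s - 1\<bar>" if "s \<in> S" "s \<noteq> 1" for s
      using gap that \<open>1 \<in> S\<close> by blast
    with False assms(2,6,7) show ?thesis by fastforce
  qed
  then show ?thesis
    using assms(1,3,4) by simp
qed

lemma surj_linear_if_aff_dim_full:
  fixes L :: "'a::euclidean_space \<Rightarrow> 'b::euclidean_space"
  assumes "linear L" and "S \<subseteq> (+) c ` range L" and "aff_dim S = DIM('b)"
  shows "surj L"
proof -
  have "affine (range L)"
    using assms(1) by (simp add: linear_subspace_image subspace_imp_affine)
  then have "affine ((+) c ` range L)"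
    by (rule affine_translation[THEN iffD1])
  then have "affine hull S \<subseteq> (+) c ` range L"
    using assms(2) by (simp add: hull_minimal)
  moreover have "affine hull S = UNIV"
    using assms(3) aff_dim_eq_full by blast
  ultimately have "c + y \<in> (+) c ` range L" for y
    by blast
  then have "y \<in> range L" for y
    by (simp add: image_iff)
  then show ?thesis
    by blast
qed

text \<open>The witness is the image of the facet \<open>t\<^sub>i = 0\<close> of the unit cube.\<close>
lemma vec_lincomb_in_facet_span:
  fixes v :: "'n::finite \<Rightarrow> 'a::real_vector" and c :: 'a
  assumes inj: "inj (vec_lincomb v)" and "d$i = 0"
  defines "Q \<equiv> (\<lambda>t. c + vec_lincomb v t) ` cbox 0 1"
  shows "\<exists>F. F face_of Q \<and> F \<noteq> {} \<and> F \<noteq> Q \<and> vec_lincomb v d \<in> span {x - y | x y. x \<in> F \<and> y \<in> F}"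
proof (intro exI conjI)
  let ?P = "\<lambda>t. c + vec_lincomb v t"
  define facet where "facet = cbox 0 (1::real^'n) \<inter> {x. (- axis i 1) \<bullet> x = 0}"
  have mem_facet: "t \<in> facet \<longleftrightarrow> t \<in> cbox 0 1 \<and> t$i = 0" for t
    by (simp add: facet_def inner_axis' inner_real_def)
  have injP: "inj ?P"
    using inj by (auto simp: inj_def)
  have "facet face_of cbox 0 1"
    unfolding facet_def
    by (rule face_of_Int_supporting_hyperplane_le) (auto simp: mem_box_cart inner_axis')
  then have "vec_lincomb v ` facet face_of vec_lincomb v ` cbox 0 1"
    by (rule face_of_linear_image[OF linear_vec_lincomb inj, THEN iffD2])
  then have "(+) c ` vec_lincomb v ` facet face_of (+) c ` vec_lincomb v ` cbox 0 1"
    by (rule face_of_translation_eq[THEN iffD2])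
  then show "?P ` facet face_of Q"
    by (simp add: Q_def image_image)
  have "0 \<in> facet"
    by (simp add: mem_facet mem_box_cart)
  then show "?P ` facet \<noteq> {}"
    by blast
  have "?P (axis i 1) \<in> Q"
    by (simp add: Q_def mem_box_cart axis_def)
  moreover have "?P (axis i 1) \<notin> ?P ` facet"
    by (simp add: inj_image_mem_iff[OF injP] mem_facet)
  ultimately show "?P ` facet \<noteq> Q"
    by blast
  have parallel: "v j \<in> span {x - y | x y. x \<in> ?P ` facet \<and> y \<in> ?P ` facet}" if "j \<noteq> i" for j
  proof (rule span_base)
    have "axis j 1 \<in> facet"
      using that by (simp add: mem_facet mem_box_cart axis_def)
    moreover have "v j = ?P (axis j 1) - ?P 0"
      using linear_0[OF linear_vec_lincomb] by (simp add: vec_lincomb_axis)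
    ultimately show "v j \<in> {x - y | x y. x \<in> ?P ` facet \<and> y \<in> ?P ` facet}"
      using \<open>0 \<in> facet\<close> by blast
  qed
  show "vec_lincomb v d \<in> span {x - y | x y. x \<in> ?P ` facet \<and> y \<in> ?P ` facet}"
    unfolding vec_lincomb_def[of v d]
  proof (rule span_sum)
    fix j
    show "d$j *\<^sub>R v j \<in> span {x - y | x y. x \<in> ?P ` facet \<and> y \<in> ?P ` facet}"
      using parallel[of j] \<open>d$i = 0\<close> by (cases "j = i") (simp_all add: span_zero span_mul)
  qed
qed

lemma translate_param_cube:
  fixes v :: "'n::finite \<Rightarrow> 'a::real_vector"
  shows "(\<lambda>q. vec_lincomb v d + q) ` (\<lambda>t. c + vec_lincomb v t) ` cbox 0 1 =
         (\<lambda>t. c + vec_lincomb v t) ` {t. \<forall>i. t$i \<in> {d$i..1 + d$i}}"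
proof -
  have "(\<lambda>q. vec_lincomb v d + q) ` (\<lambda>t. c + vec_lincomb v t) ` cbox 0 1 =
        (\<lambda>t. c + vec_lincomb v t) ` (\<lambda>t. d + t) ` cbox 0 1"
    unfolding image_image by (simp add: linear_add[OF linear_vec_lincomb] algebra_simps)
  also have "(\<lambda>t. d + t) ` cbox 0 1 = cbox d (d + 1)"
    using cbox_translation[of d 0 1] by simp
  also have "\<dots> = {t. \<forall>i. t$i \<in> {d$i..1 + d$i}}"
    by (auto simp: mem_box_cart add.commute)
  finally show ?thesis .
qed

lemma card_grid_in_generic_translate:
  fixes v :: "'n::finite \<Rightarrow> real^'n" and c :: "real^'n" and S :: "'n \<Rightarrow> real set"
  assumes inj: "inj (vec_lincomb v)"
    and S: "\<And>i. finite (S i)" "\<And>i. S i \<subseteq> {0..1}" "\<And>i. 0 \<in> S i" "\<And>i. 1 \<in> S i"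
  defines "P \<equiv> \<lambda>t. c + vec_lincomb v t"
  shows "\<exists>\<epsilon>>0. \<forall>\<delta>. norm \<delta> < \<epsilon> \<and>
           (\<forall>F. F face_of P ` cbox 0 1 \<and> F \<noteq> {} \<and> F \<noteq> P ` cbox 0 1 \<longrightarrow>
                \<delta> \<notin> span {x - y | x y. x \<in> F \<and> y \<in> F})
         \<longrightarrow> (\<Prod>i\<in>UNIV. card (S i) - 1) =
             card (P ` {t. \<forall>i. t$i \<in> S i} \<inter> (\<lambda>q. \<delta> + q) ` P ` cbox 0 1)"
proof -
  obtain g where "g > 0" and gap: "\<And>i s s'. s \<in> S i \<Longrightarrow> s' \<in> S i \<Longrightarrow> s \<noteq> s' \<Longrightarrow> g \<le> \<bar>s - s'\<bar>"
    using finite_sets_uniform_gap S(1) by metis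
  have "surj (vec_lincomb v)"
    using linear_injective_imp_surjective[OF linear_vec_lincomb inj] by simp
  then obtain Linv where "linear Linv" and right_inv: "\<And>y. vec_lincomb v (Linv y) = y"
    using real_vector.linear_surjective_right_inverse[OF linear_vec_lincomb] by (metis comp_apply id_apply)
  then obtain B where "B > 0" and B: "\<And>y. norm (Linv y) \<le> B * norm y"
    using linear_bounded_pos by blast
  have "(\<Prod>i\<in>UNIV. card (S i) - 1) = card (P ` {t. \<forall>i. t$i \<in> S i} \<inter> (\<lambda>q. \<delta> + q) ` P ` cbox 0 1)"
    if small: "norm \<delta> < g / B"
      and generic: "\<forall>F. F face_of P ` cbox 0 1 \<and> F \<noteq> {} \<and> F \<noteq> P ` cbox 0 1 \<longrightarrow>
                     \<delta> \<notin> span {x - y | x y. x \<in> F \<and> y \<in> F}" for \<delta>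
  proof -
    define d where "d = Linv \<delta>"
    have Ld: "vec_lincomb v d = \<delta>"
      by (simp add: d_def right_inv)
    have "\<bar>d$i\<bar> < g" for i
    proof -
      have "\<bar>d$i\<bar> \<le> B * norm \<delta>"
        using component_le_norm_cart[of d i] B[of \<delta>] by (simp add: d_def)
      also have "\<dots> < g"
        using small \<open>B > 0\<close> by (simp add: field_simps)
      finally show ?thesis .
    qed
    moreover have "d$i \<noteq> 0" for i
      using vec_lincomb_in_facet_span[OF inj, of d i c] generic Ld
      unfolding P_def by blast
    ultimately have card_coord: "card (S i \<inter> {d$i..1 + d$i}) = card (S i) - 1" for i
      using S gap by (intro card_Int_shifted_unit_interval) auto
    have "inj P"
      using inj by (auto simp: P_def inj_def)
    have "(\<lambda>q. \<delta> + q) ` P ` cbox 0 1 = P ` {t. \<forall>i. t$i \<in> {d$i..1 + d$i}}"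
      using translate_param_cube[of v d c] Ld by (simp add: P_def)
    then have "P ` {t. \<forall>i. t$i \<in> S i} \<inter> (\<lambda>q. \<delta> + q) ` P ` cbox 0 1 =
          P ` ({t. \<forall>i. t$i \<in> S i} \<inter> {t. \<forall>i. t$i \<in> {d$i..1 + d$i}})"
      by (simp add: image_Int[OF \<open>inj P\<close>])
    also have "{t. \<forall>i. t$i \<in> S i} \<inter> {t. \<forall>i. t$i \<in> {d$i..1 + d$i}} =
               {t. \<forall>i. t$i \<in> S i \<inter> {d$i..1 + d$i}}"
      by auto
    finally show ?thesis
      by (simp only: card_image[OF inj_on_subset[OF \<open>inj P\<close> subset_UNIV]] card_vec_set card_coord)
  qed
  moreover have "g / B > 0"
    using \<open>g > 0\<close> \<open>B > 0\<close> by simp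
  ultimately show ?thesis
    by blast
qed

theorem proposition5p3:
  fixes W :: "'n::finite \<Rightarrow> (real^'n) set"
  assumes fin: "\<And>i. finite (W i)"
    and seg: "\<And>i. \<exists>a b. a \<noteq> b \<and> convex hull (W i) = closed_segment a b"
    and dim: "aff_dim (msum (\<lambda>i. convex hull (W i)) UNIV) = int CARD('n)"
  shows "\<exists>\<epsilon>>0. \<forall>\<delta>::real^'n. norm \<delta> < \<epsilon> \<and>
           (\<forall>F. F face_of (msum (\<lambda>i. convex hull (W i)) UNIV) \<and> F \<noteq> {} \<and>
                F \<noteq> msum (\<lambda>i. convex hull (W i)) UNIV \<longrightarrow>
                \<delta> \<notin> span {x - y | x y. x \<in> F \<and> y \<in> F})
         \<longrightarrow> mixedD W UNIV =
             int (card (msum W UNIV \<inter> (\<lambda>q. \<delta> + q) ` msum (\<lambda>i. convex hull (W i)) UNIV))"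
proof -
  obtain a b where ab: "\<And>i. a i \<noteq> b i" "\<And>i. convex hull (W i) = closed_segment (a i) (b i)"
    using seg by metis
  define v where "v i = b i - a i" for i
  define P where "P t = (\<Sum>i\<in>UNIV. a i) + vec_lincomb v t" for t
  define S where "S i = {s \<in> {0..1}. a i + s *\<^sub>R v i \<in> W i}" for i
  have S: "\<And>i. finite (S i)" "\<And>i. S i \<subseteq> {0..1}" "\<And>i. 0 \<in> S i" "\<And>i. 1 \<in> S i"
    and W: "W = (\<lambda>i. (\<lambda>s. a i + s *\<^sub>R v i) ` S i)"
    using param_of_set_with_segment_hull[OF fin ab(2) ab(1)] by (auto simp: S_def v_def fun_eq_iff)
  have hulls: "(\<lambda>i. convex hull (W i)) = (\<lambda>i. (\<lambda>s. a i + s *\<^sub>R v i) ` {0..1})"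
    by (simp add: fun_eq_iff ab(2) closed_segment_param v_def)
  have cube: "{t. \<forall>i. t$i \<in> {0..1}} = cbox 0 (1::real^'n)"
    by (auto simp: mem_box_cart)
  have Q: "msum (\<lambda>i. convex hull (W i)) UNIV = P ` cbox 0 1"
    unfolding hulls msum_param_segments cube P_def[abs_def] ..
  have "surj (vec_lincomb v)"
    using dim unfolding Q P_def
    by (intro surj_linear_if_aff_dim_full[OF linear_vec_lincomb]) auto
  then have inj: "inj (vec_lincomb v)"
    using linear_surjective_imp_injective[OF linear_vec_lincomb[of v]] by simp
  have D: "mixedD W UNIV = int (\<Prod>i\<in>UNIV. card (S i) - 1)"
    unfolding W using S(1,3) by (intro mixedD_param_segments[OF inj]) auto
  have MW: "msum W UNIV = P ` {t. \<forall>i. t$i \<in> S i}"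
    unfolding W msum_param_segments P_def[abs_def] ..
  show ?thesis
    unfolding D MW Q P_def[abs_def] of_nat_eq_iff
    by (rule card_grid_in_generic_translate[OF inj S])
qed

end
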